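(* Let $\Gamma$ be a finitely generated group with finite symmetric generating set $S$, $\rho\colon\Gamma\curvearrowright\mathcal H$ an affine action on a Hilbert space and $f\colon\Gamma\to\mathcal H$ a $\rho$-equivariant map. Then for all $x\in\Gamma$, $$\|\Delta Hf(x)\|\le\max_{x'\in x(S\cup\{e\})}\|\Delta f(x')\|,$$ and if equality holds for some $x$, then $\Delta f$ is a constant vector independent of $x\in\Gamma$.
   Context: $f$ is $\rho$-equivariant if $f(\gamma x)=\rho(\gamma)(f(x))$ for all $\gamma,x$. Averaging operator: $Hf(x)=\frac12\big(\frac1{\#S}\sum_{s\in S}f(xs)+f(x)\big)$; Laplacian: $\Delta f=(1-H)f$, i.e. $\Delta f(x)=\frac1{2\#S}\sum_{s\in S}(f(x)-f(xs))$. $x(S\cup\{e\})=\{xs:s\in S\}\cup\{x\}$. *)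

theory Defs
  imports "HOL-Analysis.Analysis" "HOL-Algebra.Generated_Groups"
begin

definition affine_map :: "('h::real_vector \<Rightarrow> 'h) \<Rightarrow> bool" where
  "affine_map T \<longleftrightarrow> (\<exists>L b. linear L \<and> (\<forall>u. T u = L u + b))"

definition affine_action :: "('g, 'm) monoid_scheme \<Rightarrow> ('g \<Rightarrow> 'h::real_vector \<Rightarrow> 'h) \<Rightarrow> bool" where
  "affine_action G \<rho> \<longleftrightarrow>
     (\<forall>\<gamma>\<in>carrier G. affine_map (\<rho> \<gamma>)) \<and>
     \<rho> \<one>\<^bsub>G\<^esub> = id \<and>
     (\<forall>\<gamma>\<in>carrier G. \<forall>\<delta>\<in>carrier G. \<rho> (\<gamma> \<otimes>\<^bsub>G\<^esub> \<delta>) = \<rho> \<gamma> \<circ> \<rho> \<delta>)"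

definition equivariant :: "('g, 'm) monoid_scheme \<Rightarrow> ('g \<Rightarrow> 'h \<Rightarrow> 'h) \<Rightarrow> ('g \<Rightarrow> 'h) \<Rightarrow> bool" where
  "equivariant G \<rho> f \<longleftrightarrow>
     (\<forall>\<gamma>\<in>carrier G. \<forall>x\<in>carrier G. f (\<gamma> \<otimes>\<^bsub>G\<^esub> x) = \<rho> \<gamma> (f x))"

definition avg_op :: "('g, 'm) monoid_scheme \<Rightarrow> 'g set \<Rightarrow> ('g \<Rightarrow> 'h::real_vector) \<Rightarrow> 'g \<Rightarrow> 'h" where
  "avg_op G S f x = (1/2) *\<^sub>R ((1 / real (card S)) *\<^sub>R (\<Sum>s\<in>S. f (x \<otimes>\<^bsub>G\<^esub> s)) + f x)"

definition laplacian :: "('g, 'm) monoid_scheme \<Rightarrow> 'g set \<Rightarrow> ('g \<Rightarrow> 'h::real_vector) \<Rightarrow> 'g \<Rightarrow> 'h" where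
  "laplacian G S f x = f x - avg_op G S f x"

end

theory Submission
  imports Defs
begin

text \<open>
  Since \<open>H\<close> is linear, \<open>\<Delta>Hf = H\<Delta>f\<close>, and \<open>H\<Delta>f(x)\<close> is the
  midpoint of \<open>\<Delta>f(x)\<close> and the mean of the \<open>\<Delta>f(xs)\<close>; this gives the inequality.
  By strict convexity of the Hilbert norm, equality forces \<open>\<Delta>f(xs) = \<Delta>f(x)\<close> for all \<open>s \<in> S\<close>.
  For an affine action, \<open>\<Delta>f\<close> is equivariant for the linear part of \<open>\<rho>\<close>, because the weights
  defining \<open>\<Delta>\<close> sum to zero; so this right invariance transports from \<open>x\<close> to every point of
  \<open>\<Gamma>\<close>, and since \<open>S\<close> generates \<open>\<Gamma>\<close>, \<open>\<Delta>f\<close> is constant.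
\<close>

lemma midpoint_eq_of_norm_eq_bound:
  fixes a b :: "'h::real_inner"
  assumes "norm a \<le> M" "norm b \<le> M" "norm ((1/2) *\<^sub>R (a + b)) = M"
  shows "a = b"
proof -
  have "norm (a - b)^2 + norm (a + b)^2 = 2 * norm a ^2 + 2 * norm b ^2"
    by (simp add: power2_norm_eq_inner inner_simps inner_commute)
  moreover have "norm (a + b)^2 = 4 * M^2" using assms(3) by (simp add: power_mult_distrib)
  moreover have "norm a ^2 \<le> M^2" "norm b ^2 \<le> M^2"
    using assms(1,2) by (simp_all add: power_mono)
  ultimately have "norm (a - b)^2 \<le> 0" by linarith
  then show ?thesis by simp
qed

lemma mean_eq_of_norm_eq_bound:
  fixes v :: "'i \<Rightarrow> 'h::real_inner"
  assumes fin: "finite S" and ne: "S \<noteq> {}" and bound: "\<forall>s\<in>S. norm (v s) \<le> M"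
    and eq: "norm ((1 / real (card S)) *\<^sub>R (\<Sum>s\<in>S. v s)) = M"
  shows "\<forall>s\<in>S. v s = (1 / real (card S)) *\<^sub>R (\<Sum>s\<in>S. v s)"
proof -
  define n where "n = real (card S)"
  define u where "u = (1 / n) *\<^sub>R (\<Sum>s\<in>S. v s)"
  have "n > 0" using fin ne by (simp add: n_def card_gt_0_iff)
  then have sum_v: "(\<Sum>s\<in>S. v s) = n *\<^sub>R u" by (simp add: u_def)
  have "(\<Sum>s\<in>S. norm (v s - u)^2) = (\<Sum>s\<in>S. norm (v s)^2 - 2 * (v s \<bullet> u) + norm u ^2)"
    by (intro sum.cong refl) (simp add: power2_norm_eq_inner inner_simps inner_commute)
  also have "\<dots> = (\<Sum>s\<in>S. norm (v s)^2) - 2 * ((\<Sum>s\<in>S. v s) \<bullet> u) + n * norm u ^2"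
    by (simp add: sum.distrib sum_subtractf sum_distrib_left inner_sum_left n_def)
  also have "\<dots> = (\<Sum>s\<in>S. norm (v s)^2) - n * norm u ^2"
    by (simp add: sum_v power2_norm_eq_inner)
  also have "\<dots> \<le> n * M^2 - n * M^2"
  proof -
    have "(\<Sum>s\<in>S. norm (v s)^2) \<le> (\<Sum>s\<in>S. M^2)"
      by (intro sum_mono) (simp add: bound power_mono)
    moreover have "norm u = M" using eq by (simp add: u_def n_def)
    ultimately show ?thesis by (simp add: n_def)
  qed
  finally have "(\<Sum>s\<in>S. norm (v s - u)^2) \<le> 0" by simp
  then have "\<forall>s\<in>S. norm (v s - u)^2 = 0"
    using sum_nonneg_eq_0_iff[OF fin] by (smt (verit) sum_nonneg zero_le_power2)
  then show ?thesis by (simp add: u_def n_def)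
qed

lemma avg_op_diff:
  "avg_op G S (\<lambda>y. f y - g y) x = avg_op G S f x - avg_op G S g x"
  by (simp add: avg_op_def sum_subtractf algebra_simps)

lemma laplacian_avg_op_commute:
  "laplacian G S (avg_op G S f) = avg_op G S (laplacian G S f)"
proof -
  have lap: "laplacian G S f = (\<lambda>y. f y - avg_op G S f y)"
    by (simp add: laplacian_def fun_eq_iff)
  show ?thesis
    unfolding lap laplacian_def[of G S "avg_op G S f"] by (simp add: fun_eq_iff avg_op_diff)
qed

lemma norm_mean_le:
  fixes v :: "'i \<Rightarrow> 'h::real_normed_vector"
  assumes "\<forall>s\<in>S. norm (v s) \<le> M" "M \<ge> 0"
  shows "norm ((1 / real (card S)) *\<^sub>R (\<Sum>s\<in>S. v s)) \<le> M"
proof (cases "finite S \<and> S \<noteq> {}")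
  case True
  have "norm (\<Sum>s\<in>S. v s) \<le> real (card S) * M"
    using norm_sum[of v S] sum_mono[of S "\<lambda>s. norm (v s)" "\<lambda>_. M"] assms(1) by auto
  with True show ?thesis by (simp add: field_simps card_gt_0_iff)
qed (use assms(2) in auto)

context monoid
begin

lemma norm_avg_op_le:
  assumes "x \<in> carrier G"
    and bound: "\<forall>y\<in>(\<lambda>s. x \<otimes> s) ` (S \<union> {\<one>}). norm (g y) \<le> M"
  shows "norm (avg_op G S g x) \<le> M"
proof -
  have gx: "norm (g x) \<le> M" using bound assms(1) by force
  then have "M \<ge> 0" using norm_ge_zero order_trans by blast
  have "norm ((1 / real (card S)) *\<^sub>R (\<Sum>s\<in>S. g (x \<otimes> s))) \<le> M"
    using bound \<open>M \<ge> 0\<close> by (intro norm_mean_le) auto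
  then have "norm (avg_op G S g x) \<le> (1/2) * (M + M)"
    unfolding avg_op_def
    using norm_triangle_ineq[of "(1 / real (card S)) *\<^sub>R (\<Sum>s\<in>S. g (x \<otimes> s))" "g x"] gx
    by simp
  then show ?thesis by simp
qed

lemma avg_op_norm_eq_bound_imp_right_invariant:
  fixes g :: "'a \<Rightarrow> 'h::real_inner"
  assumes "x \<in> carrier G" "finite S"
    and bound: "\<forall>y\<in>(\<lambda>s. x \<otimes> s) ` (S \<union> {\<one>}). norm (g y) \<le> M"
    and eq: "norm (avg_op G S g x) = M"
  shows "\<forall>s\<in>S. g (x \<otimes> s) = g x"
proof (cases "S = {}")
  case False
  define mean where "mean = (1 / real (card S)) *\<^sub>R (\<Sum>s\<in>S. g (x \<otimes> s))"
  have gx: "norm (g x) \<le> M" using bound assms(1) by force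
  then have "M \<ge> 0" using norm_ge_zero order_trans by blast
  have mean_le: "norm mean \<le> M"
    unfolding mean_def using bound \<open>M \<ge> 0\<close> by (intro norm_mean_le) auto
  have "mean = g x"
    by (rule midpoint_eq_of_norm_eq_bound[OF mean_le gx]) (use eq in \<open>simp add: avg_op_def mean_def\<close>)
  with eq have "norm mean = M" by (simp add: avg_op_def flip: mean_def scaleR_2)
  then have "\<forall>s\<in>S. g (x \<otimes> s) = mean"
    using mean_eq_of_norm_eq_bound[OF assms(2) False, of "\<lambda>s. g (x \<otimes> s)" M] bound
    by (simp add: mean_def)
  with \<open>mean = g x\<close> show ?thesis by simp
qed simp

end

context group
begin

lemma laplacian_left_mult:
  assumes "finite S" "S \<noteq> {}" "S \<subseteq> carrier G"
    and action: "affine_action G \<rho>" and equiv: "equivariant G \<rho> f"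
    and g: "g \<in> carrier G" and y: "y \<in> carrier G"
  shows "laplacian G S f (g \<otimes> y) = \<rho> g (laplacian G S f y) - \<rho> g 0"
proof -
  define n where "n = real (card S)"
  have "n > 0" using assms(1,2) by (simp add: n_def card_gt_0_iff)
  have lap: "laplacian G S f z = (1/2) *\<^sub>R f z - (1 / (2*n)) *\<^sub>R (\<Sum>s\<in>S. f (z \<otimes> s))" for z
    by (simp add: laplacian_def avg_op_def n_def algebra_simps)
      (metis scaleR_add_left field_sum_of_halves scaleR_one)
  obtain L b where L: "linear L" and \<rho>g: "\<And>u. \<rho> g u = L u + b"
    using action g unfolding affine_action_def affine_map_def by blast
  have f_left: "f (g \<otimes> z) = L (f z) + b" if "z \<in> carrier G" for z
    using equiv g that \<rho>g unfolding equivariant_def by simp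
  have "(\<Sum>s\<in>S. f (g \<otimes> y \<otimes> s)) = (\<Sum>s\<in>S. L (f (y \<otimes> s)) + b)"
    using assms(3) y g by (intro sum.cong refl) (auto simp: m_assoc f_left)
  also have "\<dots> = L (\<Sum>s\<in>S. f (y \<otimes> s)) + n *\<^sub>R b"
    by (simp add: sum.distrib linear_sum[OF L] n_def sum_constant_scaleR)
  finally have "laplacian G S f (g \<otimes> y)
      = (1/2) *\<^sub>R (L (f y) + b) - (1 / (2*n)) *\<^sub>R (L (\<Sum>s\<in>S. f (y \<otimes> s)) + n *\<^sub>R b)"
    by (simp add: lap f_left[OF y])
  also have "\<dots> = L (laplacian G S f y)"
    using \<open>n > 0\<close> by (simp add: lap linear_diff[OF L] linear_scale[OF L] algebra_simps)
  finally show ?thesis by (simp add: \<rho>g linear_0[OF L])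
qed

lemma laplacian_right_invariant_everywhere:
  assumes "finite S" "S \<subseteq> carrier G"
    and action: "affine_action G \<rho>" and equiv: "equivariant G \<rho> f"
    and x: "x \<in> carrier G" and at_x: "\<forall>s\<in>S. laplacian G S f (x \<otimes> s) = laplacian G S f x"
    and y: "y \<in> carrier G" and s: "s \<in> S"
  shows "laplacian G S f (y \<otimes> s) = laplacian G S f y"
proof -
  define D where "D = laplacian G S f"
  define g where "g = y \<otimes> inv x"
  have "S \<noteq> {}" using s by blast
  note translate = laplacian_left_mult[OF assms(1) this assms(2) action equiv]
  have g_carrier: "g \<in> carrier G" and gx: "g \<otimes> x = y"
    using x y by (simp_all add: g_def m_assoc)
  have s_carrier: "s \<in> carrier G" using s assms(2) by auto
  have "D (y \<otimes> s) = D (g \<otimes> (x \<otimes> s))"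
    using x s_carrier g_carrier by (simp add: gx flip: m_assoc)
  also have "\<dots> = \<rho> g (D (x \<otimes> s)) - \<rho> g 0"
    using translate g_carrier x s_carrier by (simp add: D_def)
  also have "\<dots> = \<rho> g (D x) - \<rho> g 0" using at_x s by (simp add: D_def)
  also have "\<dots> = D y"
    using translate[OF g_carrier x] by (simp add: D_def gx)
  finally show ?thesis by (simp add: D_def)
qed

lemma right_invariant_generate_imp_const:
  assumes "S \<subseteq> carrier G" "generate G S = carrier G"
    and invariant: "\<And>y s. y \<in> carrier G \<Longrightarrow> s \<in> S \<Longrightarrow> \<phi> (y \<otimes> s) = \<phi> y"
    and y: "y \<in> carrier G"
  shows "\<phi> y = \<phi> \<one>"
proof -
  have "\<forall>z\<in>carrier G. \<phi> (z \<otimes> h) = \<phi> z" if "h \<in> generate G S" for h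
    using that
  proof induction
    case (incl h)
    then show ?case using invariant by blast
  next
    case (inv h)
    then have "h \<in> carrier G" using assms(1) by auto
    have "\<phi> (z \<otimes> inv h) = \<phi> z" if "z \<in> carrier G" for z
      using invariant[of "z \<otimes> inv h" h] inv \<open>h \<in> carrier G\<close> that by (simp add: m_assoc)
    then show ?case by blast
  next
    case (eng h1 h2)
    then have "h1 \<in> carrier G" "h2 \<in> carrier G"
      using generate_incl[OF assms(1)] by auto
    with eng show ?case by (simp flip: m_assoc)
  qed simp
  then show ?thesis using assms(2) y by (metis l_one one_closed)
qed

end

theorem mainTheorem3:
  fixes G :: "('g, 'm) monoid_scheme"
    and S :: "'g set"
    and \<rho> :: "'g \<Rightarrow> 'h::{real_inner, complete_space} \<Rightarrow> 'h"
    and f :: "'g \<Rightarrow> 'h"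
  assumes "group G"
    and "finite S" and "S \<subseteq> carrier G"
    and "\<forall>s\<in>S. inv\<^bsub>G\<^esub> s \<in> S"
    and "generate G S = carrier G"
    and "affine_action G \<rho>"
    and "equivariant G \<rho> f"
  shows "(\<forall>x\<in>carrier G.
            norm (laplacian G S (avg_op G S f) x)
              \<le> Max ((\<lambda>x'. norm (laplacian G S f x')) ` ((\<lambda>s. x \<otimes>\<^bsub>G\<^esub> s) ` (S \<union> {\<one>\<^bsub>G\<^esub>}))))
       \<and> ((\<exists>x\<in>carrier G.
            norm (laplacian G S (avg_op G S f) x)
              = Max ((\<lambda>x'. norm (laplacian G S f x')) ` ((\<lambda>s. x \<otimes>\<^bsub>G\<^esub> s) ` (S \<union> {\<one>\<^bsub>G\<^esub>}))))
          \<longrightarrow> (\<exists>c. \<forall>y\<in>carrier G. laplacian G S f y = c))"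
proof -
  interpret group G by fact
  define D where "D = laplacian G S f"
  define M where "M x = Max ((\<lambda>x'. norm (D x')) ` ((\<lambda>s. x \<otimes>\<^bsub>G\<^esub> s) ` (S \<union> {\<one>\<^bsub>G\<^esub>})))" for x
  have bound: "\<forall>y\<in>(\<lambda>s. x \<otimes>\<^bsub>G\<^esub> s) ` (S \<union> {\<one>\<^bsub>G\<^esub>}). norm (D y) \<le> M x" for x
    using assms(2) by (auto simp: M_def intro: Max_ge)
  have lap_avg: "laplacian G S (avg_op G S f) = avg_op G S D"
    by (simp add: D_def laplacian_avg_op_commute)
  have "norm (laplacian G S (avg_op G S f) x) \<le> M x" if "x \<in> carrier G" for x
    using norm_avg_op_le[OF that bound] by (simp add: lap_avg)
  moreover have "\<exists>c. \<forall>y\<in>carrier G. D y = c"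
    if x: "x \<in> carrier G" and eq: "norm (laplacian G S (avg_op G S f) x) = M x" for x
  proof -
    have "\<forall>s\<in>S. D (x \<otimes>\<^bsub>G\<^esub> s) = D x"
      using avg_op_norm_eq_bound_imp_right_invariant[OF x assms(2) bound] eq by (simp add: lap_avg)
    then have "D y = D \<one>\<^bsub>G\<^esub>" if "y \<in> carrier G" for y
      using right_invariant_generate_imp_const[OF assms(3,5) _ that]
        laplacian_right_invariant_everywhere[OF assms(2,3,6,7) x]
      unfolding D_def by blast
    then show ?thesis by blast
  qed
  ultimately show ?thesis unfolding M_def D_def by blast
qed

end
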